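(* Let $SI$, $UI$, $CI$ be a nonnegative bivariate information decomposition, let $\overline{SI}(S;X_1,X_2):=\sup_{f} SI(f(S);X_1,X_2)$ (supremum over all functions $f$ from the alphabet of $S$ to an arbitrary finite set), and let $\overline{UI}^*(S;X_1\setminus X_2):=I(S;X_1)-\overline{SI}(S;X_1,X_2)$. Suppose that $\overline{UI}^*(S;X_1\setminus X_2)=0$, and let $f^*$ be a function achieving the supremum defining $\overline{SI}(S;X_1,X_2)$. Then $X_1 - f^*(S) - S$ is a Markov chain (i.e. $X_1$ and $S$ are conditionally independent given $f^*(S)$), and $UI(f^*(S);X_1\setminus X_2)=0$.
   Context: All random variables have finite alphabets. A nonnegative bivariate information decomposition consists of nonnegative functions $SI(S;X_1,X_2)$, $UI(S;X_1\setminus X_2)$, $UI(S;X_2\setminus X_1)$, $CI(S;X_1,X_2)$, defined for every joint distribution of $(S,X_1,X_2)$ with arbitrary finite alphabets and depending continuously on it, such that $I(S;X_1X_2)=SI(S;X_1,X_2)+CI(S;X_1,X_2)+UI(S;X_1\setminus X_2)+UI(S;X_2\setminus X_1)$, $I(S;X_1)=SI(S;X_1,X_2)+UI(S;X_1\setminus X_2)$ and $I(S;X_2)=SI(S;X_1,X_2)+UI(S;X_2\setminus X_1)$, where $I$ denotes mutual information. *)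

theory Defs
  imports "HOL-Probability.Probability_Mass_Function"
begin

text \<open>Joint distributions of (S, X1, X2). All finite alphabets are encoded as finite
  subsets of nat; a joint distribution is a pmf on nat \<times> nat \<times> nat with finite support.\<close>

type_synonym dist3 = "(nat \<times> nat \<times> nat) pmf"

definition prv :: "'w pmf \<Rightarrow> ('w \<Rightarrow> 'v) \<Rightarrow> 'v \<Rightarrow> real" where
  "prv p X x = measure_pmf.prob p {w. X w = x}"

definition mutual_info :: "'w pmf \<Rightarrow> ('w \<Rightarrow> 'a) \<Rightarrow> ('w \<Rightarrow> 'b) \<Rightarrow> real" where
  "mutual_info p X Y =
     (\<Sum>xy \<in> (\<lambda>w. (X w, Y w)) ` set_pmf p.
        prv p (\<lambda>w. (X w, Y w)) xy *
        log 2 (prv p (\<lambda>w. (X w, Y w)) xy / (prv p X (fst xy) * prv p Y (snd xy))))"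

definition S_rv :: "nat \<times> nat \<times> nat \<Rightarrow> nat" where "S_rv w = fst w"
definition X1_rv :: "nat \<times> nat \<times> nat \<Rightarrow> nat" where "X1_rv w = fst (snd w)"
definition X2_rv :: "nat \<times> nat \<times> nat \<Rightarrow> nat" where "X2_rv w = snd (snd w)"
definition X12_rv :: "nat \<times> nat \<times> nat \<Rightarrow> nat \<times> nat" where "X12_rv w = snd w"

definition continuous_dist :: "(dist3 \<Rightarrow> real) \<Rightarrow> bool" where
  "continuous_dist F \<longleftrightarrow>
     (\<forall>A q r. finite A \<longrightarrow> set_pmf r \<subseteq> A \<longrightarrow> (\<forall>n. set_pmf (q n) \<subseteq> A) \<longrightarrow>
        (\<forall>w\<in>A. (\<lambda>n. pmf (q n) w) \<longlonglongrightarrow> pmf r w) \<longrightarrow>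
        (\<lambda>n. F (q n)) \<longlonglongrightarrow> F r)"

definition nonneg_PID ::
  "(dist3 \<Rightarrow> real) \<Rightarrow> (dist3 \<Rightarrow> real) \<Rightarrow> (dist3 \<Rightarrow> real) \<Rightarrow> (dist3 \<Rightarrow> real) \<Rightarrow> bool" where
  "nonneg_PID SI UI1 UI2 CI \<longleftrightarrow>
     continuous_dist SI \<and> continuous_dist UI1 \<and> continuous_dist UI2 \<and> continuous_dist CI \<and>
     (\<forall>p. finite (set_pmf p) \<longrightarrow>
        SI p \<ge> 0 \<and> UI1 p \<ge> 0 \<and> UI2 p \<ge> 0 \<and> CI p \<ge> 0 \<and>
        mutual_info p S_rv X12_rv = SI p + CI p + UI1 p + UI2 p \<and>
        mutual_info p S_rv X1_rv = SI p + UI1 p \<and>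
        mutual_info p S_rv X2_rv = SI p + UI2 p)"

definition push_S :: "(nat \<Rightarrow> nat) \<Rightarrow> dist3 \<Rightarrow> dist3" where
  "push_S f p = map_pmf (\<lambda>(s, x1, x2). (f s, x1, x2)) p"

definition SI_bar :: "(dist3 \<Rightarrow> real) \<Rightarrow> dist3 \<Rightarrow> real" where
  "SI_bar SI p = (SUP f. SI (push_S f p))"

definition UI_bar_star :: "(dist3 \<Rightarrow> real) \<Rightarrow> dist3 \<Rightarrow> real" where
  "UI_bar_star SI p = mutual_info p S_rv X1_rv - SI_bar SI p"

definition cond_indep :: "'w pmf \<Rightarrow> ('w \<Rightarrow> 'a) \<Rightarrow> ('w \<Rightarrow> 'b) \<Rightarrow> ('w \<Rightarrow> 'c) \<Rightarrow> bool" where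
  "cond_indep p X Y Z \<longleftrightarrow>
     (\<forall>x y z. prv p (\<lambda>w. (X w, Y w, Z w)) (x, y, z) * prv p Z z =
              prv p (\<lambda>w. (X w, Z w)) (x, z) * prv p (\<lambda>w. (Y w, Z w)) (y, z))"

end

theory Submission
  imports Defs
begin

text \<open>For every f, SI(f(S);X1,X2) \<le> I(f(S);X1) \<le> I(S;X1): the first by nonnegativity of UI,
  the second by the data processing inequality. The hypothesis makes both ends equal for f*, so
  UI(f*(S);X1\X2) = 0 and I(f*(S);X1) = I(S;X1). For a function g of S the gap I(S;X) - I(g(S);X)
  is the Kullback-Leibler divergence of p(s,x) from p(s) p(x | g(s)), which by Gibbs' inequality
  vanishes only if the two distributions coincide, and that is exactly the Markov chain
  X - g(S) - S.\<close>

lemma prv_eq_sum_pmf: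
  assumes "finite (set_pmf p)"
  shows "prv p X x = (\<Sum>w\<in>{w\<in>set_pmf p. X w = x}. pmf p w)"
proof -
  have "prv p X x = measure p ({w. X w = x} \<inter> set_pmf p)"
    unfolding prv_def by (simp add: measure_Int_set_pmf)
  also have "{w. X w = x} \<inter> set_pmf p = {w\<in>set_pmf p. X w = x}" by auto
  also have "measure p {w\<in>set_pmf p. X w = x} = (\<Sum>w\<in>{w\<in>set_pmf p. X w = x}. pmf p w)"
    using assms by (intro measure_measure_pmf_finite) auto
  finally show ?thesis .
qed

lemma prv_nonneg: "prv p X x \<ge> 0"
  unfolding prv_def by simp

lemma prv_pos:
  assumes "w \<in> set_pmf p"
  shows "prv p X (X w) > 0"
proof -
  have "pmf p w \<le> prv p X (X w)"
    unfolding prv_def measure_pmf_single[symmetric]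
    by (intro measure_pmf.finite_measure_mono) auto
  with pmf_positive[OF assms] show ?thesis by linarith
qed

lemma prv_eq_0:
  assumes "x \<notin> X ` set_pmf p"
  shows "prv p X x = 0"
proof -
  have "{w. X w = x} \<inter> set_pmf p = {}" using assms by auto
  then show ?thesis unfolding prv_def by (metis measure_Int_set_pmf measure_empty)
qed

lemma prv_le_prv_comp: "prv p X x \<le> prv p (\<lambda>w. g (X w)) (g x)"
  unfolding prv_def by (intro measure_pmf.finite_measure_mono) auto

lemma sum_image_prv_mult:
  fixes G :: "'v \<Rightarrow> real"
  assumes "finite (set_pmf p)"
  shows "(\<Sum>y\<in>F ` set_pmf p. prv p F y * G y) = (\<Sum>w\<in>set_pmf p. pmf p w * G (F w))"
proof -
  have "(\<Sum>y\<in>F ` set_pmf p. prv p F y * G y) =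
        (\<Sum>y\<in>F ` set_pmf p. \<Sum>w\<in>{w\<in>set_pmf p. F w = y}. pmf p w * G (F w))"
    by (intro sum.cong refl) (auto simp: prv_eq_sum_pmf[OF assms] sum_distrib_right)
  also have "\<dots> = (\<Sum>w\<in>set_pmf p. pmf p w * G (F w))"
    using assms by (intro sum.group) auto
  finally show ?thesis .
qed

lemma sum_image_prv:
  assumes "finite (set_pmf p)"
  shows "(\<Sum>y\<in>F ` set_pmf p. prv p F y) = 1"
  using sum_image_prv_mult[OF assms, of F "\<lambda>_. 1"] sum_pmf_eq_1[OF assms] by simp

lemma sum_pmf_mult_div_prv:
  assumes "finite (set_pmf p)"
  shows "(\<Sum>w\<in>set_pmf p. pmf p w * (\<phi> (F w) / prv p F (F w))) = (\<Sum>y\<in>F ` set_pmf p. \<phi> y)"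
proof -
  have "(\<Sum>y\<in>F ` set_pmf p. \<phi> y) = (\<Sum>y\<in>F ` set_pmf p. prv p F y * (\<phi> y / prv p F y))"
  proof (intro sum.cong refl)
    fix y assume "y \<in> F ` set_pmf p"
    then have "prv p F y > 0" using prv_pos[of _ p F] by auto
    then show "\<phi> y = prv p F y * (\<phi> y / prv p F y)" by simp
  qed
  also have "\<dots> = (\<Sum>w\<in>set_pmf p. pmf p w * (\<phi> (F w) / prv p F (F w)))"
    using sum_image_prv_mult[OF assms] .
  finally show ?thesis ..
qed

lemma prv_marginal:
  assumes "finite (set_pmf p)"
  shows "prv p Z z = (\<Sum>x\<in>X ` set_pmf p. prv p (\<lambda>w. (Z w, X w)) (z, x))"
proof -
  have "(\<Sum>x\<in>X ` set_pmf p. prv p (\<lambda>w. (Z w, X w)) (z, x)) =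
        (\<Sum>x\<in>X ` set_pmf p. \<Sum>w\<in>{w\<in>{w\<in>set_pmf p. Z w = z}. X w = x}. pmf p w)"
    by (intro sum.cong refl) (auto simp: prv_eq_sum_pmf[OF assms] intro!: sum.cong)
  also have "\<dots> = (\<Sum>w\<in>{w\<in>set_pmf p. Z w = z}. pmf p w)"
    using assms by (intro sum.group) auto
  finally show ?thesis by (simp add: prv_eq_sum_pmf[OF assms])
qed

lemma mutual_info_eq_sum_pmf:
  assumes "finite (set_pmf p)"
  shows "mutual_info p X Y = (\<Sum>w\<in>set_pmf p. pmf p w *
     log 2 (prv p (\<lambda>w. (X w, Y w)) (X w, Y w) / (prv p X (X w) * prv p Y (Y w))))"
  unfolding mutual_info_def
  using sum_image_prv_mult[OF assms, of "\<lambda>w. (X w, Y w)"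
     "\<lambda>xy. log 2 (prv p (\<lambda>w. (X w, Y w)) xy / (prv p X (fst xy) * prv p Y (snd xy)))"]
  by simp

lemma prv_map_pmf: "prv (map_pmf h p) X x = prv p (\<lambda>w. X (h w)) x"
  unfolding prv_def by (simp add: vimage_def)

lemma mutual_info_map_pmf:
  "mutual_info (map_pmf h p) X Y = mutual_info p (\<lambda>w. X (h w)) (\<lambda>w. Y (h w))"
  unfolding mutual_info_def prv_map_pmf by (simp add: image_image)

lemma log2_le_minus_one:
  fixes t :: real
  assumes "t > 0"
  shows "log 2 t \<le> (t - 1) / ln 2"
    and "log 2 t = (t - 1) / ln 2 \<Longrightarrow> t = 1"
proof -
  have "log 2 t = ln t / ln 2" by (simp add: log_def)
  then show "log 2 t \<le> (t - 1) / ln 2"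
    using ln_le_minus_one[OF assms] by (simp add: divide_right_mono)
  assume "log 2 t = (t - 1) / ln 2"
  then have "ln t = t - 1" by (simp add: log_def)
  then show "t = 1" using ln_eq_minus_one[OF assms] by simp
qed

lemma gibbs_inequality:
  fixes P t :: "'a \<Rightarrow> real"
  assumes "finite A" "sum P A = 1" and pos: "\<And>w. w \<in> A \<Longrightarrow> P w > 0 \<and> t w > 0"
  shows "(1 - (\<Sum>w\<in>A. P w * t w)) / ln 2 \<le> (\<Sum>w\<in>A. P w * - log 2 (t w))"
    and "(\<Sum>w\<in>A. P w * - log 2 (t w)) \<le> (1 - (\<Sum>w\<in>A. P w * t w)) / ln 2 \<Longrightarrow>
      w \<in> A \<Longrightarrow> t w = 1"
proof -
  define gap where "gap w = P w * ((t w - 1) / ln 2 - log 2 (t w))" for w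
  have gap_nonneg: "gap w \<ge> 0" if "w \<in> A" for w
    using pos[OF that] log2_le_minus_one(1)[of "t w"] unfolding gap_def by simp
  have "gap w = P w * - log 2 (t w) - (P w - P w * t w) / ln 2" for w
    unfolding gap_def by (simp add: algebra_simps diff_divide_distrib)
  then have "(\<Sum>w\<in>A. P w * - log 2 (t w)) - (1 - (\<Sum>w\<in>A. P w * t w)) / ln 2 = sum gap A"
    using assms(2) by (simp add: sum_subtractf sum_divide_distrib[symmetric])
  moreover have "sum gap A \<ge> 0" using gap_nonneg by (simp add: sum_nonneg)
  ultimately show "(1 - (\<Sum>w\<in>A. P w * t w)) / ln 2 \<le> (\<Sum>w\<in>A. P w * - log 2 (t w))" by simp
  assume "(\<Sum>w\<in>A. P w * - log 2 (t w)) \<le> (1 - (\<Sum>w\<in>A. P w * t w)) / ln 2" "w \<in> A"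
  with \<open>_ = sum gap A\<close> gap_nonneg have "gap w = 0"
    using sum_nonneg_eq_0_iff[OF assms(1)] by (smt (verit) sum_nonneg)
  then show "t w = 1"
    using pos[OF \<open>w \<in> A\<close>] log2_le_minus_one(2)[of "t w"] unfolding gap_def by simp
qed

text \<open>The distribution p(s) p(x | g(s)) of (S, X), under which X - g(S) - S is a Markov chain.\<close>

definition markov_approx ::
  "'w pmf \<Rightarrow> ('w \<Rightarrow> 'a) \<Rightarrow> ('a \<Rightarrow> 'c) \<Rightarrow> ('w \<Rightarrow> 'b) \<Rightarrow> 'a \<times> 'b \<Rightarrow> real" where
  "markov_approx p S g X = (\<lambda>(s, x).
     prv p S s * prv p (\<lambda>w. (g (S w), X w)) (g s, x) / prv p (\<lambda>w. g (S w)) (g s))"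

lemma markov_approx_nonneg: "markov_approx p S g X sx \<ge> 0"
  unfolding markov_approx_def by (simp add: case_prod_beta prv_nonneg)

lemma markov_approx_eq_0:
  assumes "sx \<notin> S ` set_pmf p \<times> X ` set_pmf p"
  shows "markov_approx p S g X sx = 0"
proof -
  obtain s x where sx: "sx = (s, x)" by fastforce
  have "prv p S s = 0 \<or> prv p (\<lambda>w. (g (S w), X w)) (g s, x) = 0"
    using assms unfolding sx by (auto intro: prv_eq_0)
  then show ?thesis unfolding markov_approx_def sx by auto
qed

lemma sum_markov_approx:
  assumes "finite (set_pmf p)"
  shows "(\<Sum>sx\<in>S ` set_pmf p \<times> X ` set_pmf p. markov_approx p S g X sx) = 1"
proof -
  let ?W = "set_pmf p"
  have "(\<Sum>sx\<in>S ` ?W \<times> X ` ?W. markov_approx p S g X sx) =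
        (\<Sum>s\<in>S ` ?W. prv p S s / prv p (\<lambda>w. g (S w)) (g s) *
           (\<Sum>x\<in>X ` ?W. prv p (\<lambda>w. (g (S w), X w)) (g s, x)))"
    unfolding markov_approx_def by (simp add: sum.cartesian_product[symmetric] sum_distrib_left)
  also have "\<dots> = (\<Sum>s\<in>S ` ?W. prv p S s)"
  proof (intro sum.cong refl)
    fix s assume "s \<in> S ` ?W"
    then have "prv p (\<lambda>w. g (S w)) (g s) > 0" using prv_pos[of _ p "\<lambda>w. g (S w)"] by auto
    then show "prv p S s / prv p (\<lambda>w. g (S w)) (g s) *
        (\<Sum>x\<in>X ` ?W. prv p (\<lambda>w. (g (S w), X w)) (g s, x)) = prv p S s"
      using prv_marginal[OF assms, of "\<lambda>w. g (S w)" "g s" X] by simp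
  qed
  also have "\<dots> = 1" using sum_image_prv[OF assms] .
  finally show ?thesis .
qed

lemma sum_markov_approx_support_le_1:
  assumes "finite (set_pmf p)"
  shows "(\<Sum>sx\<in>(\<lambda>w. (S w, X w)) ` set_pmf p. markov_approx p S g X sx) \<le> 1"
proof -
  have "(\<Sum>sx\<in>(\<lambda>w. (S w, X w)) ` set_pmf p. markov_approx p S g X sx)
      \<le> (\<Sum>sx\<in>S ` set_pmf p \<times> X ` set_pmf p. markov_approx p S g X sx)"
    using assms by (intro sum_mono2) (auto simp: markov_approx_nonneg)
  then show ?thesis unfolding sum_markov_approx[OF assms] .
qed

lemma mutual_info_diff_comp:
  assumes "finite (set_pmf p)"
  shows "mutual_info p S X - mutual_info p (\<lambda>w. g (S w)) X =
    (\<Sum>w\<in>set_pmf p. pmf p w *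
       - log 2 (markov_approx p S g X (S w, X w) / prv p (\<lambda>w. (S w, X w)) (S w, X w)))"
  unfolding mutual_info_eq_sum_pmf[OF assms] sum_subtractf[symmetric] right_diff_distrib[symmetric]
proof (intro sum.cong refl arg_cong2[where f = "(*)"])
  have log_ratio: "log 2 (a / (b * e)) - log 2 (c / (d * e)) = - log 2 (b * c / d / a)"
    if "a > 0" "b > 0" "c > 0" "d > 0" "e > 0" for a b c d e :: real
    using that by (simp add: log_divide log_mult)
  fix w assume "w \<in> set_pmf p"
  then show "log 2 (prv p (\<lambda>w. (S w, X w)) (S w, X w) / (prv p S (S w) * prv p X (X w))) -
      log 2 (prv p (\<lambda>w. (g (S w), X w)) (g (S w), X w) /
        (prv p (\<lambda>w. g (S w)) (g (S w)) * prv p X (X w))) =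
    - log 2 (markov_approx p S g X (S w, X w) / prv p (\<lambda>w. (S w, X w)) (S w, X w))"
    unfolding markov_approx_def prod.case by (intro log_ratio prv_pos)
qed

lemma mutual_info_diff_comp_ge:
  assumes "finite (set_pmf p)"
  shows "(1 - (\<Sum>sx\<in>(\<lambda>w. (S w, X w)) ` set_pmf p. markov_approx p S g X sx)) / ln 2
    \<le> mutual_info p S X - mutual_info p (\<lambda>w. g (S w)) X"
    and "mutual_info p S X \<le> mutual_info p (\<lambda>w. g (S w)) X \<Longrightarrow> w \<in> set_pmf p \<Longrightarrow>
    markov_approx p S g X (S w, X w) = prv p (\<lambda>w. (S w, X w)) (S w, X w)"
proof -
  define t where "t w = markov_approx p S g X (S w, X w) / prv p (\<lambda>w. (S w, X w)) (S w, X w)" for w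
  have pos: "pmf p w > 0 \<and> t w > 0" if "w \<in> set_pmf p" for w
  proof -
    have "prv p (\<lambda>w. g (S w)) (g (S w)) > 0" "prv p (\<lambda>w. (g (S w), X w)) (g (S w), X w) > 0"
      "prv p S (S w) > 0" "prv p (\<lambda>w. (S w, X w)) (S w, X w) > 0"
      using that by (auto intro!: prv_pos)
    then show ?thesis using that unfolding t_def markov_approx_def by (simp add: pmf_positive)
  qed
  have mass: "(\<Sum>w\<in>set_pmf p. pmf p w * t w) =
      (\<Sum>sx\<in>(\<lambda>w. (S w, X w)) ` set_pmf p. markov_approx p S g X sx)"
    unfolding t_def using sum_pmf_mult_div_prv[OF assms] .
  have gap: "mutual_info p S X - mutual_info p (\<lambda>w. g (S w)) X =
      (\<Sum>w\<in>set_pmf p. pmf p w * - log 2 (t w))"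
    unfolding t_def using mutual_info_diff_comp[OF assms] .
  note gibbs = gibbs_inequality[OF assms sum_pmf_eq_1[OF assms order_refl] pos]
  show ge: "(1 - (\<Sum>sx\<in>(\<lambda>w. (S w, X w)) ` set_pmf p. markov_approx p S g X sx)) / ln 2
    \<le> mutual_info p S X - mutual_info p (\<lambda>w. g (S w)) X"
    using gibbs(1) unfolding mass gap .
  assume le: "mutual_info p S X \<le> mutual_info p (\<lambda>w. g (S w)) X" and w: "w \<in> set_pmf p"
  have "0 \<le> (1 - (\<Sum>w\<in>set_pmf p. pmf p w * t w)) / ln 2"
    unfolding mass using sum_markov_approx_support_le_1[OF assms, where S = S and X = X and g = g]
    by (auto intro!: divide_nonneg_pos)
  with le have "(\<Sum>w\<in>set_pmf p. pmf p w * - log 2 (t w))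
      \<le> (1 - (\<Sum>w\<in>set_pmf p. pmf p w * t w)) / ln 2"
    unfolding gap[symmetric] by linarith
  then have "t w = 1" using gibbs(2) w by blast
  then show "markov_approx p S g X (S w, X w) = prv p (\<lambda>w. (S w, X w)) (S w, X w)"
    using pos[OF w] unfolding t_def by (auto simp: divide_eq_1_iff)
qed

lemma cond_indep_comp_if_eq_markov_approx:
  assumes eq: "\<And>sx. prv p (\<lambda>w. (S w, X w)) sx = markov_approx p S g X sx"
  shows "cond_indep p X S (\<lambda>w. g (S w))"
  unfolding cond_indep_def
proof (intro allI)
  fix x s z
  show "prv p (\<lambda>w. (X w, S w, g (S w))) (x, s, z) * prv p (\<lambda>w. g (S w)) z =
        prv p (\<lambda>w. (X w, g (S w))) (x, z) * prv p (\<lambda>w. (S w, g (S w))) (s, z)"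
  proof (cases "z = g s")
    case False
    then have "prv p (\<lambda>w. (X w, S w, g (S w))) (x, s, z) = 0" "prv p (\<lambda>w. (S w, g (S w))) (s, z) = 0"
      by (auto intro!: prv_eq_0)
    then show ?thesis by simp
  next
    case True
    have "prv p (\<lambda>w. (X w, S w, g (S w))) (x, s, z) = prv p (\<lambda>w. (S w, X w)) (s, x)"
      "prv p (\<lambda>w. (S w, g (S w))) (s, z) = prv p S s"
      unfolding prv_def True by (auto intro!: arg_cong[where f = "measure p"])
    moreover have "prv p (\<lambda>w. (X w, g (S w))) (x, z) = prv p (\<lambda>w. (g (S w), X w)) (z, x)"
      unfolding prv_def by (auto intro!: arg_cong[where f = "measure p"])
    moreover have "prv p S s = 0" if "prv p (\<lambda>w. g (S w)) (g s) = 0"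
      using prv_le_prv_comp[of p S s g] prv_nonneg[of p S s] that by linarith
    ultimately show ?thesis
      unfolding eq markov_approx_def True by auto
  qed
qed

lemma mutual_info_comp_le:
  assumes "finite (set_pmf p)"
  shows "mutual_info p (\<lambda>w. g (S w)) X \<le> mutual_info p S X"
  using mutual_info_diff_comp_ge(1)[OF assms, where S = S and X = X and g = g]
    sum_markov_approx_support_le_1[OF assms, where S = S and X = X and g = g]
  by (smt (verit) divide_nonneg_pos ln_gt_zero)

lemma cond_indep_of_mutual_info_comp_ge:
  assumes fin: "finite (set_pmf p)"
    and ge: "mutual_info p S X \<le> mutual_info p (\<lambda>w. g (S w)) X"
  shows "cond_indep p X S (\<lambda>w. g (S w))"
proof (rule cond_indep_comp_if_eq_markov_approx)
  let ?A = "(\<lambda>w. (S w, X w)) ` set_pmf p" and ?T = "S ` set_pmf p \<times> X ` set_pmf p"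
  let ?q = "markov_approx p S g X"
  fix sx
  have "sum ?q ?A = 1"
    using mutual_info_diff_comp_ge(1)[OF fin, where S = S and X = X and g = g]
      sum_markov_approx_support_le_1[OF fin, where S = S and X = X and g = g] ge
    by (smt (verit) divide_pos_pos ln_gt_zero)
  then have "sum ?q (?T - ?A) = 0"
    using fin sum_markov_approx[OF fin, where S = S and X = X and g = g] by (subst sum_diff) auto
  then have q_outside: "?q sx = 0" if "sx \<notin> ?A"
    using fin that markov_approx_eq_0[of sx] sum_nonneg_eq_0_iff[of "?T - ?A" ?q]
    by (cases "sx \<in> ?T") (auto simp: markov_approx_nonneg)
  show "prv p (\<lambda>w. (S w, X w)) sx = ?q sx"
  proof (cases "sx \<in> ?A")
    case True
    then show ?thesis using mutual_info_diff_comp_ge(2)[OF fin ge] by auto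
  next
    case False
    then show ?thesis using q_outside prv_eq_0 by metis
  qed
qed

theorem lemma4:
  fixes SI UI1 UI2 CI :: "dist3 \<Rightarrow> real" and p :: dist3 and fstar :: "nat \<Rightarrow> nat"
  assumes "nonneg_PID SI UI1 UI2 CI"
    and "finite (set_pmf p)"
    and "UI_bar_star SI p = 0"
    and "SI (push_S fstar p) = SI_bar SI p"
  shows "cond_indep p X1_rv S_rv (\<lambda>w. fstar (S_rv w)) \<and> UI1 (push_S fstar p) = 0"
proof -
  let ?q = "push_S fstar p"
  have "finite (set_pmf ?q)" using assms(2) unfolding push_S_def by simp
  then have UI1_nonneg: "UI1 ?q \<ge> 0" and decomp: "mutual_info ?q S_rv X1_rv = SI ?q + UI1 ?q"
    using assms(1) unfolding nonneg_PID_def by blast+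
  have "mutual_info ?q S_rv X1_rv = mutual_info p (\<lambda>w. fstar (S_rv w)) X1_rv"
    unfolding push_S_def mutual_info_map_pmf S_rv_def X1_rv_def by (simp add: case_prod_beta)
  moreover have "SI ?q = mutual_info p S_rv X1_rv"
    using assms(3,4) unfolding UI_bar_star_def by simp
  moreover note mutual_info_comp_le[OF assms(2), of fstar S_rv X1_rv]
  ultimately have "UI1 ?q = 0" and "mutual_info p S_rv X1_rv \<le> mutual_info p (\<lambda>w. fstar (S_rv w)) X1_rv"
    using UI1_nonneg decomp by linarith+
  then show ?thesis using cond_indep_of_mutual_info_comp_ge[OF assms(2)] by blast
qed

end
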